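(* Let $\Sigma\subset\mathbb R^d$ be a bounded open set containing $0$. Then: (a) for each $x\in\mathbb R^d\setminus\{0\}$ the limit $R_\Sigma(x):=\lim_{\varepsilon\searrow0}\big(\int_\varepsilon^{+\infty}\frac{d\mu}{\mu}1_\Sigma(\mu x)+\ln\varepsilon\big)$ exists; (b) the even function $G_\Sigma:\mathbb R^d\setminus\{0\}\to\mathbb R$, $G_\Sigma(x)=\tfrac12[R_\Sigma(x)+R_\Sigma(-x)]$, satisfies $G_\Sigma(x)=G_\Sigma\big(\frac{x}{|x|}\big)-\ln|x|$; (c) if $\Sigma$ is star-shaped with respect to $0$, then $G_\Sigma(\omega)=\tfrac12[\ln\ell_\Sigma(\omega)+\ln\ell_\Sigma(-\omega)]$ for each $\omega\in S^{d-1}$.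
   Context: $1_\Sigma$ is the characteristic function of $\Sigma$. For an open set $\Sigma$ star-shaped with respect to $0$, $\ell_\Sigma:S^{d-1}\to\,]0,\infty[$ is defined by $\ell_\Sigma(\omega)=\sup\{\mu\ge0:\mu\omega\in\Sigma\}$. *)

theory Defs
  imports "HOL-Analysis.Analysis"
begin

definition trunc_int :: "'a::euclidean_space set \<Rightarrow> 'a \<Rightarrow> real \<Rightarrow> real" where
  "trunc_int S x \<epsilon> = integral {\<epsilon>..} (\<lambda>\<mu>. indicator S (\<mu> *\<^sub>R x) / \<mu>) + ln \<epsilon>"

definition R_Sigma :: "'a::euclidean_space set \<Rightarrow> 'a \<Rightarrow> real" where
  "R_Sigma S x = Lim (at_right 0) (trunc_int S x)"

definition G_Sigma :: "'a::euclidean_space set \<Rightarrow> 'a \<Rightarrow> real" where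
  "G_Sigma S x = (R_Sigma S x + R_Sigma S (- x)) / 2"

definition ell_Sigma :: "'a::real_vector set \<Rightarrow> 'a \<Rightarrow> real" where
  "ell_Sigma S \<omega> = Sup {\<mu>. \<mu> \<ge> 0 \<and> \<mu> *\<^sub>R \<omega> \<in> S}"

definition star_shaped_0 :: "'a::real_vector set \<Rightarrow> bool" where
  "star_shaped_0 S \<longleftrightarrow> (\<forall>x\<in>S. closed_segment 0 x \<subseteq> S)"

end

theory Submission
  imports Defs
begin

(* Near 0 the ray \<mu> \<mapsto> \<mu> x stays in a ball inside \<Sigma>, where the integrand is 1/\<mu>, so the
   truncated integral does not depend on \<epsilon> once \<epsilon> is small; hence R(x) exists. As \<Sigma> is
   bounded, the ray leaves \<Sigma> for large \<mu>, so every integral lives on a compact interval and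
   the substitution \<mu> \<mapsto> s \<mu> gives R(s x) = R(x) - ln s, which yields (b). For star-shaped \<Sigma>
   the ray lies in \<Sigma> exactly for \<mu> < ell(\<omega>), so the truncated integral equals ln ell(\<omega>)
   for every \<epsilon> \<le> ell(\<omega>). *)

abbreviation ray_integrand :: "'a::real_vector set \<Rightarrow> 'a \<Rightarrow> real \<Rightarrow> real" where
  "ray_integrand S x \<equiv> \<lambda>\<mu>. indicator S (\<mu> *\<^sub>R x) / \<mu>"

lemma eventually_scaleR_notin_bounded:
  fixes x :: "'a::real_normed_vector"
  assumes "bounded S" "x \<noteq> 0"
  shows "\<forall>\<^sub>F \<mu> in at_top. \<mu> *\<^sub>R x \<notin> S"
proof -
  obtain B where B: "B > 0" "\<forall>y\<in>S. norm y < B"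
    using assms(1) bounded_pos_less by blast
  have "\<mu> *\<^sub>R x \<notin> S" if "\<mu> \<ge> B / norm x" for \<mu>
  proof -
    have "B \<le> \<mu> * norm x" using that assms(2) by (simp add: field_simps)
    also have "\<dots> \<le> norm (\<mu> *\<^sub>R x)" by (simp add: mult_right_mono)
    finally show ?thesis using B(2) by force
  qed
  then show ?thesis by (auto simp: eventually_at_top_linorder)
qed

lemma has_integral_atLeast_iff_atLeastAtMost:
  fixes f :: "real \<Rightarrow> 'b::banach"
  assumes "a \<le> b" "\<forall>\<mu>\<ge>b. f \<mu> = 0"
  shows "(f has_integral I) {a..} \<longleftrightarrow> (f has_integral I) {a..b}"
proof -
  have extend: "(f has_integral J) {a..}" if "(f has_integral J) {a..b}" for J
  proof -
    have "((\<lambda>\<mu>. if \<mu> \<in> {a..b} then f \<mu> else 0) has_integral J) {a..}"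
      using that by (subst has_integral_restrict) auto
    then show ?thesis
      by (rule has_integral_cong[THEN iffD1, rotated]) (use assms(2) in auto)
  qed
  moreover have "(f has_integral I) {a..b}" if "(f has_integral I) {a..}"
  proof -
    have "f integrable_on {a..b}"
      by (rule integrable_on_subinterval[OF has_integral_integrable[OF that]]) auto
    then have "I = integral {a..b} f"
      using extend that has_integral_integral has_integral_unique by blast
    then show ?thesis
      using \<open>f integrable_on {a..b}\<close> by (simp add: has_integral_integral)
  qed
  ultimately show ?thesis by blast
qed

lemma has_integral_atLeast_stretch:
  fixes f :: "real \<Rightarrow> 'b::banach"
  assumes "(f has_integral I) {a..}" "\<forall>\<mu>\<ge>b. f \<mu> = 0" "0 < s"
  shows "((\<lambda>\<mu>. s *\<^sub>R f (s * \<mu>)) has_integral I) {a / s..}"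
proof -
  define c where "c = max a b"
  have "a \<le> c" and f0: "\<forall>\<mu>\<ge>c. f \<mu> = 0" using assms(2) by (auto simp: c_def)
  have "(f has_integral I) {a..c}"
    using assms(1) has_integral_atLeast_iff_atLeastAtMost[OF \<open>a \<le> c\<close> f0] by blast
  then have "((\<lambda>\<mu>. f (s * \<mu>)) has_integral I /\<^sub>R s) {a / s..c / s}"
    using has_integral_stretch_real_iff[of s f "I /\<^sub>R s" a c] assms(3) by simp
  from has_integral_cmul[OF this, of s]
  have "((\<lambda>\<mu>. s *\<^sub>R f (s * \<mu>)) has_integral I) {a / s..c / s}"
    using assms(3) by simp
  moreover have "a / s \<le> c / s"
    using \<open>a \<le> c\<close> assms(3) by (simp add: divide_right_mono)
  moreover have "\<forall>\<mu>\<ge>c / s. s *\<^sub>R f (s * \<mu>) = 0"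
    using assms(3) f0 by (auto simp: field_simps)
  ultimately show ?thesis
    using has_integral_atLeast_iff_atLeastAtMost[of "a / s" "c / s" "\<lambda>\<mu>. s *\<^sub>R f (s * \<mu>)"] by blast
qed

lemma has_integral_reciprocal:
  fixes a b :: real
  assumes "0 < a" "a \<le> b"
  shows "((\<lambda>\<mu>. 1 / \<mu>) has_integral (ln b - ln a)) {a..b}"
proof (rule fundamental_theorem_of_calculus[OF assms(2)])
  fix \<mu> assume "\<mu> \<in> {a..b}"
  then have "(ln has_real_derivative inverse \<mu>) (at \<mu> within {a..b})"
    using assms(1) by (intro DERIV_ln has_field_derivative_at_within) auto
  then show "(ln has_vector_derivative 1 / \<mu>) (at \<mu> within {a..b})"
    by (simp add: has_real_derivative_iff_has_vector_derivative divide_inverse)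
qed

lemma ray_integrand_integrable_on_interval:
  fixes x :: "'a::real_normed_vector"
  assumes "S \<in> sets borel" "0 < a"
  shows "ray_integrand S x integrable_on {a..b}"
proof (rule measurable_bounded_by_integrable_imp_integrable[where g="\<lambda>_. 1 / a"])
  have "(\<lambda>\<mu>::real. \<mu> *\<^sub>R x) \<in> borel_measurable borel"
    by (intro borel_measurable_continuous_onI continuous_intros)
  then have "ray_integrand S x \<in> borel_measurable borel"
    using assms(1) by measurable
  then show "ray_integrand S x \<in> borel_measurable (lebesgue_on {a..b})"
    by (metis measurable_completion measurable_lborel2 measurable_restrict_space1)
  show "norm (ray_integrand S x \<mu>) \<le> 1 / a" if "\<mu> \<in> {a..b}" for \<mu>
    using that assms(2) by (auto simp: indicator_def frac_le)
qed auto

lemma ray_integrand_integrable_on_atLeast: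
  fixes x :: "'a::real_normed_vector"
  assumes "S \<in> sets borel" "bounded S" "x \<noteq> 0" "0 < a"
  shows "ray_integrand S x integrable_on {a..}"
proof -
  obtain b where b: "\<forall>\<mu>\<ge>b. \<mu> *\<^sub>R x \<notin> S"
    using eventually_scaleR_notin_bounded[OF assms(2,3)] by (auto simp: eventually_at_top_linorder)
  then have "\<forall>\<mu>\<ge>max a b. ray_integrand S x \<mu> = 0"
    by simp
  then show ?thesis
    using ray_integrand_integrable_on_interval[OF assms(1,4), of x "max a b"]
      has_integral_atLeast_iff_atLeastAtMost[of a "max a b" "ray_integrand S x"]
    by (auto simp: integrable_on_def)
qed

lemma ray_integrand_has_integral_ln:
  assumes "0 < a" "a \<le> b" "\<forall>\<mu>\<in>{a..<b}. \<mu> *\<^sub>R x \<in> S"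
  shows "(ray_integrand S x has_integral (ln b - ln a)) {a..b}"
proof (rule has_integral_spike_finite[OF _ _ has_integral_reciprocal[OF assms(1,2)]])
  show "ray_integrand S x \<mu> = 1 / \<mu>" if "\<mu> \<in> {a..b} - {b}" for \<mu>
    using that assms(3) by auto
qed auto

lemma trunc_int_eq_near_0:
  fixes x :: "'a::euclidean_space"
  assumes "S \<in> sets borel" "bounded S" "ball 0 r \<subseteq> S" "x \<noteq> 0"
    and "0 < \<epsilon>" "\<epsilon> \<le> b" "b * norm x \<le> r"
  shows "trunc_int S x \<epsilon> = trunc_int S x b"
proof -
  have "\<mu> *\<^sub>R x \<in> S" if "\<mu> \<in> {\<epsilon>..<b}" for \<mu>
  proof -
    have "norm (\<mu> *\<^sub>R x) < b * norm x"
      using that assms(4,5) by (simp add: mult_strict_right_mono)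
    then show ?thesis using assms(3,7) by auto
  qed
  then have "(ray_integrand S x has_integral (ln b - ln \<epsilon>)) {\<epsilon>..b}"
    using ray_integrand_has_integral_ln assms(5,6) by blast
  moreover have "(ray_integrand S x has_integral integral {b..} (ray_integrand S x)) {b..}"
    using ray_integrand_integrable_on_atLeast[OF assms(1,2,4), of b] assms(5,6)
    by (simp add: has_integral_integral)
  ultimately have "(ray_integrand S x has_integral (ln b - ln \<epsilon> + integral {b..} (ray_integrand S x)))
      ({\<epsilon>..b} \<union> {b..})"
    by (rule has_integral_Un) (use assms(6) in \<open>auto intro: negligible_subset[of "{b}"]\<close>)
  moreover have "{\<epsilon>..b} \<union> {b..} = {\<epsilon>..}" using assms(6) by auto
  ultimately show ?thesis unfolding trunc_int_def by (simp add: integral_unique)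
qed

lemma trunc_int_convergent:
  fixes x :: "'a::euclidean_space"
  assumes "S \<in> sets borel" "bounded S" "0 \<in> interior S" "x \<noteq> 0"
  shows "\<exists>L. (trunc_int S x \<longlongrightarrow> L) (at_right 0)"
proof -
  obtain r where r: "0 < r" "ball 0 r \<subseteq> S"
    using assms(3) mem_interior by blast
  define b where "b = r / norm x"
  have b: "0 < b" "b * norm x \<le> r"
    using r(1) assms(4) by (auto simp: b_def)
  have "trunc_int S x \<epsilon> = trunc_int S x b" if "0 < \<epsilon>" "\<epsilon> < b" for \<epsilon>
    using trunc_int_eq_near_0[OF assms(1,2) r(2) assms(4) that(1) _ b(2)] that(2) by simp
  then have "\<forall>\<^sub>F \<epsilon> in at_right 0. trunc_int S x \<epsilon> = trunc_int S x b"
    using b(1) by (intro eventually_at_rightI) auto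
  then show ?thesis using tendsto_eventually by blast
qed

lemma trunc_int_scaleR:
  fixes x :: "'a::euclidean_space"
  assumes "S \<in> sets borel" "bounded S" "x \<noteq> 0" "0 < s" "0 < \<epsilon>"
  shows "trunc_int S (s *\<^sub>R x) \<epsilon> = trunc_int S x (s * \<epsilon>) - ln s"
proof -
  let ?I = "integral {s * \<epsilon>..} (ray_integrand S x)"
  obtain b where "\<forall>\<mu>\<ge>b. \<mu> *\<^sub>R x \<notin> S"
    using eventually_scaleR_notin_bounded[OF assms(2,3)] by (auto simp: eventually_at_top_linorder)
  then have b: "\<forall>\<mu>\<ge>b. ray_integrand S x \<mu> = 0"
    by simp
  have "(ray_integrand S x has_integral ?I) {s * \<epsilon>..}"
    using ray_integrand_integrable_on_atLeast[OF assms(1-3), of "s * \<epsilon>"] assms(4,5)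
    by (simp add: has_integral_integral)
  from has_integral_atLeast_stretch[OF this b assms(4)]
  have "(ray_integrand S (s *\<^sub>R x) has_integral ?I) {\<epsilon>..}"
    using assms(4) by (simp add: mult.commute)
  then show ?thesis
    unfolding trunc_int_def using assms(4,5) by (simp add: integral_unique ln_mult)
qed

lemma R_Sigma_scaleR:
  fixes x :: "'a::euclidean_space"
  assumes "S \<in> sets borel" "bounded S" "0 \<in> interior S" "x \<noteq> 0" "0 < s"
  shows "R_Sigma S (s *\<^sub>R x) = R_Sigma S x - ln s"
proof -
  obtain L where L: "(trunc_int S x \<longlongrightarrow> L) (at_right 0)"
    using trunc_int_convergent[OF assms(1-4)] by blast
  have "filterlim (\<lambda>\<epsilon>. s * \<epsilon>) (at_right 0) (at_right 0)"
    unfolding filterlim_at using assms(5)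
    by (auto intro: eventually_at_rightI[of 0 1] intro!: tendsto_eq_intros)
  then have "((\<lambda>\<epsilon>. trunc_int S x (s * \<epsilon>) - ln s) \<longlongrightarrow> L - ln s) (at_right 0)"
    by (intro tendsto_diff filterlim_compose[OF L]) auto
  moreover have "\<forall>\<^sub>F \<epsilon> in at_right 0. trunc_int S x (s * \<epsilon>) - ln s = trunc_int S (s *\<^sub>R x) \<epsilon>"
    by (rule eventually_at_rightI[of 0 1]) (simp_all add: trunc_int_scaleR[OF assms(1,2,4,5)])
  ultimately have "(trunc_int S (s *\<^sub>R x) \<longlongrightarrow> L - ln s) (at_right 0)"
    by (rule Lim_transform_eventually)
  then show ?thesis
    using L unfolding R_Sigma_def by (simp add: tendsto_Lim)
qed

lemma G_Sigma_uminus: "G_Sigma S (- x) = G_Sigma S x"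
  unfolding G_Sigma_def by simp

lemma G_Sigma_scaleR:
  fixes x :: "'a::euclidean_space"
  assumes "S \<in> sets borel" "bounded S" "0 \<in> interior S" "x \<noteq> 0" "0 < s"
  shows "G_Sigma S (s *\<^sub>R x) = G_Sigma S x - ln s"
  using R_Sigma_scaleR[OF assms] R_Sigma_scaleR[OF assms(1-3) _ assms(5), of "- x"] assms(4)
  unfolding G_Sigma_def by (simp add: field_simps)

lemma ell_Sigma_star_shaped:
  fixes \<omega> :: "'a::real_normed_vector"
  assumes "open S" "bounded S" "0 \<in> S" "star_shaped_0 S" "\<omega> \<noteq> 0"
  shows "\<forall>\<mu>\<ge>0. \<mu> *\<^sub>R \<omega> \<in> S \<longleftrightarrow> \<mu> < ell_Sigma S \<omega>"
    and "0 < ell_Sigma S \<omega>"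
proof -
  define A where "A = {\<mu>. \<mu> \<ge> 0 \<and> \<mu> *\<^sub>R \<omega> \<in> S}"
  have ell: "ell_Sigma S \<omega> = Sup A" unfolding ell_Sigma_def A_def ..
  obtain B where B: "\<forall>y\<in>S. norm y \<le> B" using assms(2) bounded_iff by blast
  have bdd: "bdd_above A"
  proof
    fix \<mu> assume "\<mu> \<in> A"
    then have "\<mu> * norm \<omega> \<le> B" using B unfolding A_def by auto
    then show "\<mu> \<le> B / norm \<omega>" using assms(5) by (simp add: field_simps)
  qed
  show iff: "\<forall>\<mu>\<ge>0. \<mu> *\<^sub>R \<omega> \<in> S \<longleftrightarrow> \<mu> < ell_Sigma S \<omega>"
  proof (intro allI impI iffI)
    fix \<mu> :: real assume \<mu>: "\<mu> \<ge> 0" "\<mu> *\<^sub>R \<omega> \<in> S"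
    obtain e where e: "e > 0" "ball (\<mu> *\<^sub>R \<omega>) e \<subseteq> S"
      using assms(1) \<mu>(2) open_contains_ball by blast
    define \<delta> where "\<delta> = e / (2 * norm \<omega>)"
    have "0 < \<delta>" using e(1) assms(5) by (simp add: \<delta>_def)
    have "(\<mu> + \<delta>) *\<^sub>R \<omega> \<in> ball (\<mu> *\<^sub>R \<omega>) e"
      using e(1) assms(5) by (simp add: \<delta>_def dist_norm algebra_simps)
    then have "\<mu> + \<delta> \<in> A" unfolding A_def using e \<mu> assms(5) by (auto simp: \<delta>_def)
    then have "\<mu> + \<delta> \<le> Sup A" using cSup_upper bdd by blast
    then show "\<mu> < ell_Sigma S \<omega>" using ell \<open>0 < \<delta>\<close> by simp
  next
    fix \<mu> :: real assume \<mu>: "\<mu> \<ge> 0" "\<mu> < ell_Sigma S \<omega>"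
    moreover have "A \<noteq> {}"
      using assms(3) unfolding A_def by force
    ultimately obtain \<nu> where \<nu>: "\<nu> \<in> A" "\<mu> < \<nu>"
      using less_cSup_iff[OF _ bdd] ell by auto
    then have "\<nu> *\<^sub>R \<omega> \<in> S" "0 < \<nu>" using \<mu>(1) unfolding A_def by auto
    moreover have "\<mu> *\<^sub>R \<omega> \<in> closed_segment 0 (\<nu> *\<^sub>R \<omega>)"
      unfolding in_segment by (rule exI[where x="\<mu> / \<nu>"]) (use \<mu> \<nu> in auto)
    ultimately show "\<mu> *\<^sub>R \<omega> \<in> S" using assms(4) unfolding star_shaped_0_def by blast
  qed
  show "0 < ell_Sigma S \<omega>" using iff[rule_format, of 0] assms(3) by simp
qed

lemma trunc_int_star_shaped:
  fixes \<omega> :: "'a::euclidean_space"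
  assumes "open S" "bounded S" "0 \<in> S" "star_shaped_0 S" "\<omega> \<noteq> 0"
    and "0 < \<epsilon>" "\<epsilon> \<le> ell_Sigma S \<omega>"
  shows "trunc_int S \<omega> \<epsilon> = ln (ell_Sigma S \<omega>)"
proof -
  note ell = ell_Sigma_star_shaped[OF assms(1-5)]
  have vanish: "\<forall>\<mu>\<ge>ell_Sigma S \<omega>. ray_integrand S \<omega> \<mu> = 0"
  proof (intro allI impI)
    fix \<mu> assume "ell_Sigma S \<omega> \<le> \<mu>"
    then have "\<mu> *\<^sub>R \<omega> \<notin> S" using ell(1)[rule_format, of \<mu>] ell(2) by auto
    then show "ray_integrand S \<omega> \<mu> = 0" by simp
  qed
  have "(ray_integrand S \<omega> has_integral (ln (ell_Sigma S \<omega>) - ln \<epsilon>)) {\<epsilon>..ell_Sigma S \<omega>}"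
    by (rule ray_integrand_has_integral_ln) (use assms(6,7) ell(1) in auto)
  then have "(ray_integrand S \<omega> has_integral (ln (ell_Sigma S \<omega>) - ln \<epsilon>)) {\<epsilon>..}"
    using has_integral_atLeast_iff_atLeastAtMost[OF assms(7) vanish] by blast
  then show ?thesis
    unfolding trunc_int_def by (simp add: integral_unique)
qed

lemma R_Sigma_star_shaped:
  fixes \<omega> :: "'a::euclidean_space"
  assumes "open S" "bounded S" "0 \<in> S" "star_shaped_0 S" "\<omega> \<noteq> 0"
  shows "R_Sigma S \<omega> = ln (ell_Sigma S \<omega>)"
proof -
  have "\<forall>\<^sub>F \<epsilon> in at_right 0. trunc_int S \<omega> \<epsilon> = ln (ell_Sigma S \<omega>)"
    using trunc_int_star_shaped[OF assms] ell_Sigma_star_shaped(2)[OF assms]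
    by (intro eventually_at_rightI) auto
  then show ?thesis
    unfolding R_Sigma_def by (simp add: tendsto_eventually tendsto_Lim)
qed

theorem mainTheorem4:
  fixes \<Sigma> :: "'a::euclidean_space set"
  assumes "bounded \<Sigma>" and "open \<Sigma>" and "0 \<in> \<Sigma>"
  shows "(\<forall>x. x \<noteq> 0 \<longrightarrow>
            (\<forall>\<epsilon>>0. (\<lambda>\<mu>. indicator \<Sigma> (\<mu> *\<^sub>R x) / \<mu>) integrable_on {\<epsilon>..}) \<and>
            (\<exists>L. (trunc_int \<Sigma> x \<longlongrightarrow> L) (at_right 0)))
       \<and> (\<forall>x. x \<noteq> 0 \<longrightarrow> G_Sigma \<Sigma> (- x) = G_Sigma \<Sigma> x \<and>
              G_Sigma \<Sigma> x = G_Sigma \<Sigma> (x /\<^sub>R norm x) - ln (norm x))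
       \<and> (star_shaped_0 \<Sigma> \<longrightarrow>
            (\<forall>\<omega>\<in>sphere 0 1. G_Sigma \<Sigma> \<omega> = (ln (ell_Sigma \<Sigma> \<omega>) + ln (ell_Sigma \<Sigma> (- \<omega>))) / 2))"
proof -
  have borel: "\<Sigma> \<in> sets borel" using assms(2) by simp
  have interior: "0 \<in> interior \<Sigma>" using assms(2,3) interior_eq by blast
  have "(\<forall>\<epsilon>>0. ray_integrand \<Sigma> x integrable_on {\<epsilon>..}) \<and> (\<exists>L. (trunc_int \<Sigma> x \<longlongrightarrow> L) (at_right 0))"
    if "x \<noteq> 0" for x
    using ray_integrand_integrable_on_atLeast[OF borel assms(1) that]
      trunc_int_convergent[OF borel assms(1) interior that] by blast
  moreover have "G_Sigma \<Sigma> x = G_Sigma \<Sigma> (x /\<^sub>R norm x) - ln (norm x)" if "x \<noteq> 0" for x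
    using G_Sigma_scaleR[OF borel assms(1) interior, of "x /\<^sub>R norm x" "norm x"] that by simp
  moreover have "G_Sigma \<Sigma> \<omega> = (ln (ell_Sigma \<Sigma> \<omega>) + ln (ell_Sigma \<Sigma> (- \<omega>))) / 2"
    if "star_shaped_0 \<Sigma>" "\<omega> \<in> sphere 0 1" for \<omega>
  proof -
    have "\<omega> \<noteq> 0" "- \<omega> \<noteq> 0" using that(2) by auto
    then show ?thesis
      using R_Sigma_star_shaped[OF assms(2,1,3) that(1)] unfolding G_Sigma_def by simp
  qed
  ultimately show ?thesis using G_Sigma_uminus by blast
qed

end
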